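(* Let $E$ be a complex vector space of dimension $e$, let $U$ be a complex symplectic vector space of dimension $2k$ ($k\ge1$), and let $V=\operatorname{Sym}(E\otimes U)$ with the commuting actions of $\mathfrak{g}=\mathfrak{sp}(U)$ and $H=\mathfrak{gl}(E)$. Write $U=(U_1\oplus U_1^* )\oplus\cdots\oplus(U_k\oplus U_k^* )$ with $U_i,U_i^*$ lines such that the form pairs $U_i$ with $U_i^*$ and the summands $U_i\oplus U_i^*$ are mutually orthogonal; let the Cartan subalgebra of $\mathfrak{sp}(U)$ be the elements preserving each of these lines, and identify a weight $\chi$ with the $k$-tuple $(\chi_1,\dots,\chi_k)$ where $\varepsilon_i$ is the weight on $U_i$ (so $-\varepsilon_i$ is the weight on $U_i^*$). For $n\in\mathbf{Z}$ let $L_n=\bigoplus_{d\ge0}\operatorname{Sym}^d(E)\otimes\operatorname{Sym}^{d+n}(E)$ (with $\operatorname{Sym}^m=0$ for $m<0$). Then for every $\chi\in\mathbf{Z}^k$, as $H$-representations, \[ V_\chi\cong L_{\chi_1}\otimes\cdots\otimes L_{\chi_k}. \]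
   Context: $V_\chi$ denotes the $\chi$-weight space of $V$ for the Cartan subalgebra described in the claim. *)

theory Defs
  imports Complex_Main "HOL-Library.Poly_Mapping"
begin

text \<open>Polynomials with complex coefficients in the variables of type 'v
  (i.e. the symmetric algebra of the complex vector space with basis 'v):
  finitely supported maps from monomials (finitely supported exponent vectors)
  to coefficients.\<close>
type_synonym 'v cpoly = "('v \<Rightarrow>\<^sub>0 nat) \<Rightarrow>\<^sub>0 complex"

definition cconst :: "complex \<Rightarrow> 'v cpoly" where
  "cconst c = Poly_Mapping.single 0 c"

definition cvar :: "'v \<Rightarrow> 'v cpoly" where
  "cvar v = Poly_Mapping.single (Poly_Mapping.single v 1) 1"

definition cpderiv :: "'v \<Rightarrow> 'v cpoly \<Rightarrow> 'v cpoly" where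
  "cpderiv v f = (\<Sum>m\<in>Poly_Mapping.keys (f::'v cpoly). Poly_Mapping.single (m - Poly_Mapping.single v 1)
                      (Poly_Mapping.lookup f m * of_nat (Poly_Mapping.lookup (m::'v \<Rightarrow>\<^sub>0 nat) v)))"

text \<open>The action (as a derivation) on Sym(W), W with finite basis 'v, of the
  endomorphism of W sending the basis vector v to the sum over w of c v w times w.\<close>
definition der :: "('v::finite \<Rightarrow> 'v \<Rightarrow> complex) \<Rightarrow> 'v cpoly \<Rightarrow> 'v cpoly" where
  "der c f = (\<Sum>v\<in>UNIV. cpderiv v f * (\<Sum>w\<in>UNIV. cconst (c v w) * cvar w))"

text \<open>Matrices: X b a is the coefficient of basis vector b in X(basis vector a).\<close>

text \<open>Action of gl(E) (E with basis 'e) on Sym(E \<otimes> U) (U with basis 'u),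
  variable (a,j) standing for e_a \<otimes> u_j.\<close>
definition actE :: "('e::finite \<Rightarrow> 'e \<Rightarrow> complex) \<Rightarrow> ('e \<times> 'u::finite) cpoly \<Rightarrow> ('e \<times> 'u) cpoly" where
  "actE X = der (\<lambda>(a,j) (b,j'). if j' = j then X b a else 0)"

definition actU :: "('u::finite \<Rightarrow> 'u \<Rightarrow> complex) \<Rightarrow> ('e::finite \<times> 'u) cpoly \<Rightarrow> ('e \<times> 'u) cpoly" where
  "actU A = der (\<lambda>(a,j) (b,j'). if b = a then A j' j else 0)"

text \<open>U = C^{2k} with basis indexed by 'k \<times> bool: (i,True) spans U_i, (i,False) spans U_i^*.\<close>
definition basisU :: "'k \<times> bool \<Rightarrow> ('k \<times> bool \<Rightarrow> complex)" where
  "basisU j = (\<lambda>j'. if j' = j then 1 else 0)"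

definition matvec :: "('u::finite \<Rightarrow> 'u \<Rightarrow> complex) \<Rightarrow> ('u \<Rightarrow> complex) \<Rightarrow> ('u \<Rightarrow> complex)" where
  "matvec A u = (\<lambda>j. \<Sum>j'\<in>UNIV. A j j' * u j')"

definition omega :: "('k::finite \<times> bool \<Rightarrow> complex) \<Rightarrow> ('k \<times> bool \<Rightarrow> complex) \<Rightarrow> complex" where
  "omega u v = (\<Sum>i\<in>UNIV. u (i,True) * v (i,False) - u (i,False) * v (i,True))"

definition sp :: "('k::finite \<times> bool \<Rightarrow> 'k \<times> bool \<Rightarrow> complex) set" where
  "sp = {A. \<forall>u v. omega (matvec A u) v + omega u (matvec A v) = 0}"

definition cartan :: "('k::finite \<times> bool \<Rightarrow> 'k \<times> bool \<Rightarrow> complex) set" where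
  "cartan = {A \<in> sp. \<forall>j. \<exists>c. matvec A (basisU j) = (\<lambda>x. c * basisU j x)}"

text \<open>The weight (chi_1,...,chi_k) = sum chi_i eps_i, eps_i(A) = eigenvalue of A on U_i.\<close>
definition wt :: "('k::finite \<Rightarrow> int) \<Rightarrow> ('k \<times> bool \<Rightarrow> 'k \<times> bool \<Rightarrow> complex) \<Rightarrow> complex" where
  "wt chi A = (\<Sum>i\<in>UNIV. of_int (chi i) * A (i,True) (i,True))"

definition Vwt :: "('k::finite \<Rightarrow> int) \<Rightarrow> ('e::finite \<times> ('k \<times> bool)) cpoly set" where
  "Vwt chi = {f. \<forall>A\<in>cartan. actU A f = cconst (wt chi A) * f}"

text \<open>Sym(E) \<otimes> Sym(E) = Sym(E \<oplus> E), variables (False,a) for the first factor,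
  (True,a) for the second; L_n = sum over d of Sym^d(E) \<otimes> Sym^(d+n)(E).\<close>
definition blkdeg :: "bool \<Rightarrow> ((bool \<times> 'e::finite) \<Rightarrow>\<^sub>0 nat) \<Rightarrow> nat" where
  "blkdeg b m = (\<Sum>a\<in>UNIV. Poly_Mapping.lookup m (b,a))"

definition Lsp :: "int \<Rightarrow> (bool \<times> 'e::finite) cpoly set" where
  "Lsp n = {f. \<forall>m\<in>Poly_Mapping.keys f. \<exists>d::nat. blkdeg False m = d \<and> int (blkdeg True m) = int d + n}"

definition actL :: "('e::finite \<Rightarrow> 'e \<Rightarrow> complex) \<Rightarrow> (bool \<times> 'e) cpoly \<Rightarrow> (bool \<times> 'e) cpoly" where
  "actL X = der (\<lambda>(b,a) (b',a'). if b' = b then X a' a else 0)"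

text \<open>Embedding of the i-th tensor factor: (Sym(E)\<otimes>Sym(E))^{\<otimes>k} = Sym(\<oplus>_i (E \<oplus> E)).\<close>
definition embmon :: "'k \<Rightarrow> ('v \<Rightarrow>\<^sub>0 nat) \<Rightarrow> ('k \<times> 'v \<Rightarrow>\<^sub>0 nat)" where
  "embmon i m = (\<Sum>v\<in>Poly_Mapping.keys m. Poly_Mapping.single (i,v) (Poly_Mapping.lookup m v))"

definition emb :: "'k \<Rightarrow> 'v cpoly \<Rightarrow> ('k \<times> 'v) cpoly" where
  "emb i f = (\<Sum>m\<in>Poly_Mapping.keys f. Poly_Mapping.single (embmon i m) (Poly_Mapping.lookup f m))"

definition cspan :: "'v cpoly set \<Rightarrow> 'v cpoly set" where
  "cspan S = {\<Sum>j<(N::nat). cconst (c j) * g j | N c g. \<forall>j<N. g j \<in> S}"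

definition Ltens :: "('k::finite \<Rightarrow> int) \<Rightarrow> ('k \<times> (bool \<times> 'e::finite)) cpoly set" where
  "Ltens chi = cspan {\<Prod>i\<in>UNIV. emb i (f i) | f. \<forall>i. f i \<in> Lsp (chi i)}"

definition actT :: "('e::finite \<Rightarrow> 'e \<Rightarrow> complex) \<Rightarrow> ('k::finite \<times> (bool \<times> 'e)) cpoly \<Rightarrow> ('k \<times> (bool \<times> 'e)) cpoly" where
  "actT X = der (\<lambda>(i,b,a) (i',b',a'). if (i',b') = (i,b) then X a' a else 0)"

end

theory Submission
  imports Defs
begin

text \<open>Renaming the variable \<open>e\<^sub>a \<otimes> u\<^sub>i\<^sub>,\<^sub>b\<close> of \<open>Sym(E \<otimes> U)\<close> to the variable \<open>(i, b, a)\<close> of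
  \<open>(Sym E \<otimes> Sym E)\<^sup>\<otimes>\<^sup>k = Sym (k (E \<oplus> E))\<close> is an algebra isomorphism, and it intertwines the
  two \<open>gl(E)\<close>-actions, since both are the derivations extending \<open>X\<close> on every copy of \<open>E\<close>.
  The Cartan subalgebra acts diagonally on monomials: a monomial with \<open>p\<^sub>i\<close> factors from
  \<open>E \<otimes> U\<^sub>i\<close> and \<open>q\<^sub>i\<close> factors from \<open>E \<otimes> U\<^sub>i\<^sup>*\<close> has weight \<open>\<Sum>\<^sub>i (p\<^sub>i - q\<^sub>i) \<epsilon>\<^sub>i\<close>, and testing
  against the elements dual to the \<open>\<epsilon>\<^sub>i\<close> shows that \<open>V\<^sub>\<chi>\<close> is spanned by the monomials with
  \<open>p\<^sub>i - q\<^sub>i = \<chi>\<^sub>i\<close> for all \<open>i\<close>. The renaming sends these to the monomials whose \<open>i\<close>-th block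
  has bidegree \<open>(d, d + \<chi>\<^sub>i)\<close>, and those span \<open>L\<^bsub>\<chi>\<^sub>1\<^esub> \<otimes> \<dots> \<otimes> L\<^bsub>\<chi>\<^sub>k\<^esub>\<close>.\<close>

abbreviation "lookup \<equiv> Poly_Mapping.lookup"
abbreviation "keys \<equiv> Poly_Mapping.keys"
abbreviation "single \<equiv> Poly_Mapping.single"

lemma sum_UNIV_eq_single:
  fixes g :: "'a::finite \<Rightarrow> 'b::comm_monoid_add"
  assumes "\<And>x. x \<noteq> a \<Longrightarrow> g x = 0"
  shows "(\<Sum>x\<in>UNIV. g x) = g a"
  using sum.mono_neutral_left[of UNIV "{a}" g] assms by simp

lemma sum_UNIV_prod:
  "(\<Sum>x\<in>(UNIV :: ('a::finite \<times> 'b::finite) set). g x) = (\<Sum>a\<in>UNIV. \<Sum>b\<in>UNIV. g (a, b))"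
  by (simp add: sum.cartesian_product)

lemma lookup_map_key: "inj f \<Longrightarrow> lookup (Poly_Mapping.map_key f p) x = lookup p (f x)"
proof -
  assume [transfer_rule]: "inj f"
  show ?thesis by transfer simp
qed

lemma lookup_cconst_mult: "lookup (cconst a * f) n = a * lookup f n"
  by (simp add: cconst_def mult_map_scale_conv_mult[symmetric] Poly_Mapping.map.rep_eq when_def)

lemma keys_cconst_mult: "keys (cconst a * f) \<subseteq> keys f"
  by (auto simp: in_keys_iff lookup_cconst_mult)

lemma add_single_eq_iff:
  fixes n l :: "'v \<Rightarrow>\<^sub>0 nat"
  shows "n = l + single w 1 \<longleftrightarrow> 0 < lookup n w \<and> l = n - single w 1"
  by (auto simp: poly_mapping_eq_iff fun_eq_iff lookup_add lookup_minus lookup_single when_def)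

lemma lookup_mult_single_var:
  fixes p :: "'v cpoly"
  shows "lookup (p * single (single w 1) a) n
     = (if 0 < lookup n w then lookup p (n - single w 1) * a else 0)"
proof -
  have "(\<lambda>q. ((a when single w 1 = q) when n = l + q))
      = (\<lambda>q. ((a when n = l + single w 1) when single w 1 = q))" for l :: "'v \<Rightarrow>\<^sub>0 nat"
    by (auto simp: when_def fun_eq_iff)
  then have "lookup (p * single (single w 1) a) n = Sum_any (\<lambda>l. lookup p l * (a when n = l + single w 1))"
    by (simp only: lookup_mult lookup_single Sum_any_when_equal')
  also have "\<dots> = Sum_any (\<lambda>l. (lookup p l * a when 0 < lookup n w) when l = n - single w 1)"
    by (rule Sum_any.cong) (simp only: add_single_eq_iff, auto simp: when_def)
  finally show ?thesis by (simp add: when_def)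
qed

lemma lookup_cpderiv:
  fixes f :: "'v cpoly"
  shows "lookup (cpderiv v f) n = lookup f (n + single v 1) * of_nat (lookup n v + 1)"
proof -
  let ?s = "single v (1::nat)"
  have "lookup (cpderiv v f) n = (\<Sum>m\<in>keys f. lookup f m * of_nat (lookup m v) when m - ?s = n)"
    unfolding cpderiv_def lookup_sum by (simp add: lookup_single)
  also have "\<dots> = (\<Sum>m\<in>keys f. lookup f m * of_nat (lookup m v) when m = n + ?s)"
    by (rule sum.cong) (use add_single_eq_iff[of _ n v] in \<open>auto simp: when_def\<close>)
  also have "\<dots> = lookup f (n + ?s) * of_nat (lookup n v + 1)"
    by (auto simp: when_def in_keys_iff lookup_add)
  finally show ?thesis .
qed

lemma cconst_mult_cvar: "cconst a * cvar w = single (single w 1) a"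
  by (simp add: cconst_def cvar_def mult_single)

lemma lookup_der:
  fixes f :: "'v::finite cpoly"
  shows "lookup (der c f) n = (\<Sum>v\<in>UNIV. \<Sum>w\<in>UNIV. if 0 < lookup n w then
      lookup f (n - single w 1 + single v 1) * of_nat (lookup (n - single w 1) v + 1) * c v w else 0)"
  unfolding der_def cconst_mult_cvar sum_distrib_left lookup_sum lookup_mult_single_var lookup_cpderiv
  by (simp add: mult_ac)

lemma lookup_der_diagonal:
  fixes f :: "'v::finite cpoly"
  assumes "\<And>v w. v \<noteq> w \<Longrightarrow> c v w = 0"
  shows "lookup (der c f) n = (\<Sum>v\<in>UNIV. of_nat (lookup n v) * c v v) * lookup f n"
proof -
  have "lookup (der c f) n = (\<Sum>v\<in>UNIV. if 0 < lookup n v then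
      lookup f (n - single v 1 + single v 1) * of_nat (lookup (n - single v 1) v + 1) * c v v else 0)"
    unfolding lookup_der by (intro sum.cong refl sum_UNIV_eq_single) (simp add: assms)
  also have "\<dots> = (\<Sum>v\<in>UNIV. of_nat (lookup n v) * c v v * lookup f n)"
  proof (rule sum.cong[OF refl])
    fix v
    have "n - single v 1 + single v 1 = n" and "lookup (n - single v 1) v + 1 = lookup n v"
      if "0 < lookup n v"
      using that add_single_eq_iff[of n "n - single v 1" v] by (simp_all add: lookup_minus)
    then show "(if 0 < lookup n v then lookup f (n - single v 1 + single v 1)
        * of_nat (lookup (n - single v 1) v + 1) * c v v else 0)
      = of_nat (lookup n v) * c v v * lookup f n"
      by (simp add: mult_ac)
  qed
  finally show ?thesis by (simp add: sum_distrib_right)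
qed

section \<open>Renaming variables\<close>

text \<open>On monomials \<open>Poly_Mapping.map_key r m = m \<circ> r\<close>, so for bijective \<open>r\<close> the variable \<open>x\<close>
  becomes \<open>r x\<close>. \<open>Poly_Mapping.map_key\<close> is only specified for injective key maps,
  hence the bijectivity hypotheses below.\<close>

definition rename_vars :: "('a \<Rightarrow> 'b) \<Rightarrow> 'a cpoly \<Rightarrow> 'b cpoly" where
  "rename_vars r f = Poly_Mapping.map_key (Poly_Mapping.map_key r) f"

lemma inj_map_key_of_bij:
  assumes "bij r"
  shows "inj (Poly_Mapping.map_key r :: ('b \<Rightarrow>\<^sub>0 'c::zero) \<Rightarrow> _)"
proof (rule injI)
  fix m m' :: "'b \<Rightarrow>\<^sub>0 'c"
  assume "Poly_Mapping.map_key r m = Poly_Mapping.map_key r m'"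
  then have "lookup m (r x) = lookup m' (r x)" for x
    by (metis assms bij_is_inj lookup_map_key)
  then show "m = m'"
    by (metis assms bij_pointE poly_mapping_eqI)
qed

lemma map_key_diff_single_add_single:
  assumes "inj r"
  shows "Poly_Mapping.map_key r (m - single (r w) 1 + single (r v) 1)
       = Poly_Mapping.map_key r m - single w 1 + single v (1::nat)"
  by (rule poly_mapping_eqI)
     (simp add: assms lookup_map_key lookup_add lookup_minus lookup_single when_def inj_eq)

lemma lookup_rename_vars:
  "bij r \<Longrightarrow> lookup (rename_vars r f) m = lookup f (Poly_Mapping.map_key r m)"
  unfolding rename_vars_def by (rule lookup_map_key[OF inj_map_key_of_bij])

lemma keys_rename_vars: "bij r \<Longrightarrow> keys (rename_vars r f) = Poly_Mapping.map_key r -` keys f"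
  by (auto simp: in_keys_iff lookup_rename_vars)

lemma rename_vars_add: "bij r \<Longrightarrow> rename_vars r (f + g) = rename_vars r f + rename_vars r g"
  by (rule poly_mapping_eqI) (simp add: lookup_rename_vars lookup_add)

lemma rename_vars_cconst_mult:
  "bij r \<Longrightarrow> rename_vars r (cconst c * f) = cconst c * rename_vars r f"
  by (rule poly_mapping_eqI) (simp add: lookup_rename_vars lookup_cconst_mult)

lemma rename_vars_compose:
  "bij r \<Longrightarrow> bij s \<Longrightarrow> rename_vars s (rename_vars r f) = rename_vars (s \<circ> r) f"
  by (rule poly_mapping_eqI) (simp add: lookup_rename_vars bij_comp map_key_compose bij_is_inj)

lemma rename_vars_id: "rename_vars id f = f"
proof -
  have "Poly_Mapping.map_key id = (\<lambda>m :: 'a \<Rightarrow>\<^sub>0 nat. m)"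
    by (simp add: fun_eq_iff map_key_id id_def)
  then show ?thesis
    by (simp add: rename_vars_def map_key_id)
qed

lemma rename_vars_inv:
  assumes "bij r"
  shows "rename_vars r (rename_vars (inv r) g) = g"
  using assms surj_iff[THEN iffD1, OF bij_is_surj[OF assms]]
  by (simp add: rename_vars_compose bij_imp_bij_inv rename_vars_id)

lemma bij_rename_vars:
  assumes "bij r"
  shows "bij (rename_vars r)"
proof (rule o_bij[of "rename_vars (inv r)"])
  show "rename_vars (inv r) \<circ> rename_vars r = id"
    using assms by (simp add: fun_eq_iff rename_vars_compose bij_imp_bij_inv bij_is_inj rename_vars_id)
  show "rename_vars r \<circ> rename_vars (inv r) = id"
    using assms by (simp add: fun_eq_iff rename_vars_inv)
qed

lemma rename_vars_supported:
  assumes "bij r"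
  shows "rename_vars r ` {f. keys f \<subseteq> M} = {g. keys g \<subseteq> Poly_Mapping.map_key r -` M}"
proof (intro equalityI subsetI)
  fix g :: "'b cpoly"
  assume "g \<in> {g. keys g \<subseteq> Poly_Mapping.map_key r -` M}"
  moreover have "Poly_Mapping.map_key r (Poly_Mapping.map_key (inv r) m) = m" for m :: "_ \<Rightarrow>\<^sub>0 nat"
    using assms surj_iff[THEN iffD1, OF bij_is_surj[OF assms]]
    by (simp add: map_key_compose bij_is_inj bij_imp_bij_inv id_def map_key_id)
  ultimately have "keys (rename_vars (inv r) g) \<subseteq> M"
    by (auto simp: keys_rename_vars assms bij_imp_bij_inv)
  then show "g \<in> rename_vars r ` {f. keys f \<subseteq> M}"
    using rename_vars_inv[OF assms, of g] by (metis (no_types, lifting) image_eqI mem_Collect_eq)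
qed (auto simp: keys_rename_vars assms)

lemma rename_vars_der:
  fixes r :: "'a::finite \<Rightarrow> 'b::finite"
  assumes "bij r" and "\<And>v w. c' (r v) (r w) = c v w"
  shows "rename_vars r (der c f) = der c' (rename_vars r f)"
proof (rule poly_mapping_eqI)
  fix n
  have inj: "inj r"
    using assms(1) by (rule bij_is_inj)
  have reindex: "(\<Sum>y\<in>UNIV. g y) = (\<Sum>x\<in>UNIV. g (r x))" for g :: "'b \<Rightarrow> complex"
    using sum.reindex_bij_betw[OF assms(1)] by (rule sym)
  show "lookup (rename_vars r (der c f)) n = lookup (der c' (rename_vars r f)) n"
    unfolding lookup_rename_vars[OF assms(1)] lookup_der
    by (subst (1 2) reindex, simp only: map_key_diff_single_add_single[OF inj])
       (simp add: assms(2) lookup_map_key[OF inj]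
         lookup_rename_vars[OF assms(1)] lookup_minus lookup_single inj_eq[OF inj] cong: if_cong)
qed

section \<open>The weight spaces of \<open>Sym(E \<otimes> U)\<close>\<close>

definition mon_weight :: "('e::finite \<times> ('k \<times> bool) \<Rightarrow>\<^sub>0 nat) \<Rightarrow> 'k \<Rightarrow> int" where
  "mon_weight m i = int (\<Sum>a\<in>UNIV. lookup m (a, i, True)) - int (\<Sum>a\<in>UNIV. lookup m (a, i, False))"

lemma matvec_basisU: "matvec A (basisU j) = (\<lambda>j'. A j' j)"
  unfolding matvec_def by (intro ext, subst sum_UNIV_eq_single[where a = j]) (auto simp: basisU_def)

lemma omega_basisU: "omega (basisU (i, True)) (basisU (i, False)) = 1"
  unfolding omega_def by (subst sum_UNIV_eq_single[where a = i]) (auto simp: basisU_def)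

lemma omega_scale_left: "omega (\<lambda>x. a * u x) v = a * omega u v"
  and omega_scale_right: "omega u (\<lambda>x. a * v x) = a * omega u v"
  by (simp_all add: omega_def sum_distrib_left algebra_simps)

lemma cartan_off_diagonal:
  assumes "A \<in> cartan" and "j' \<noteq> j"
  shows "A j' j = 0"
proof -
  obtain c where "matvec A (basisU j) = (\<lambda>x. c * basisU j x)"
    using assms(1) unfolding cartan_def by blast
  then have "A j' j = c * basisU j j'"
    unfolding matvec_basisU by meson
  then show ?thesis
    using assms(2) by (simp add: basisU_def)
qed

lemma cartan_dual_eigenvalue:
  assumes "A \<in> cartan"
  shows "A (i, False) (i, False) = - A (i, True) (i, True)"
proof -
  let ?u = "basisU (i, True)" and ?v = "basisU (i, False)"
  have "omega (matvec A ?u) ?v + omega ?u (matvec A ?v) = 0"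
    using assms unfolding cartan_def sp_def by blast
  moreover have "matvec A ?u = (\<lambda>x. A (i, True) (i, True) * ?u x)"
    and "matvec A ?v = (\<lambda>x. A (i, False) (i, False) * ?v x)"
    unfolding matvec_basisU using cartan_off_diagonal[OF assms] by (auto simp: basisU_def)
  ultimately show ?thesis
    by (simp add: omega_scale_left omega_scale_right omega_basisU add_eq_0_iff)
qed

lemma lookup_actU_cartan:
  fixes f :: "('e::finite \<times> ('k::finite \<times> bool)) cpoly"
  assumes "A \<in> cartan"
  shows "lookup (actU A f) m = wt (mon_weight m) A * lookup f m"
proof -
  let ?c = "\<lambda>(a, j) (b, j'). if b = a then A j' j else 0"
  have "?c v w = 0" if "v \<noteq> w" for v w
    using that cartan_off_diagonal[OF assms] by (cases v; cases w) auto
  then have "lookup (actU A f) m = (\<Sum>v\<in>UNIV. of_nat (lookup m v) * ?c v v) * lookup f m"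
    unfolding actU_def by (rule lookup_der_diagonal)
  also have "(\<Sum>v\<in>UNIV. of_nat (lookup m v) * ?c v v)
      = (\<Sum>i\<in>UNIV. \<Sum>a\<in>UNIV. of_nat (lookup m (a, i, True)) * A (i, True) (i, True)
          + of_nat (lookup m (a, i, False)) * A (i, False) (i, False))"
    by (subst sum.swap) (simp add: sum_UNIV_prod UNIV_bool add.commute)
  also have "\<dots> = wt (mon_weight m) A"
    unfolding wt_def
  proof (rule sum.cong[OF refl])
    fix i
    show "(\<Sum>a\<in>UNIV. of_nat (lookup m (a, i, True)) * A (i, True) (i, True)
          + of_nat (lookup m (a, i, False)) * A (i, False) (i, False))
        = of_int (mon_weight m i) * A (i, True) (i, True)"
      by (simp add: mon_weight_def cartan_dual_eigenvalue[OF assms] sum_subtractf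
          left_diff_distrib sum_distrib_right)
  qed
  finally show ?thesis .
qed

definition cartan_basis :: "'k \<Rightarrow> 'k \<times> bool \<Rightarrow> 'k \<times> bool \<Rightarrow> complex" where
  "cartan_basis i = (\<lambda>j' j. if j' = j \<and> fst j = i then (if snd j then 1 else -1) else 0)"

lemma matvec_cartan_basis: "matvec (cartan_basis i) u = (\<lambda>j. cartan_basis i j j * u j)"
  unfolding matvec_def
  by (intro ext, subst sum_UNIV_eq_single[where a = "_"]) (auto simp: cartan_basis_def)

lemma cartan_basis_in_cartan: "cartan_basis (i :: 'k::finite) \<in> cartan"
proof -
  have "omega (matvec (cartan_basis i) u) v + omega u (matvec (cartan_basis i) v) = 0" for u v
    unfolding omega_def matvec_cartan_basis sum.distrib[symmetric]
    by (rule sum.neutral) (auto simp: cartan_basis_def algebra_simps)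
  moreover have "matvec (cartan_basis i) (basisU j) = (\<lambda>x. cartan_basis i j j * basisU j x)" for j
    by (auto simp: matvec_cartan_basis basisU_def)
  ultimately show ?thesis
    unfolding cartan_def sp_def by blast
qed

lemma wt_cartan_basis: "wt w (cartan_basis i) = of_int (w i)"
  unfolding wt_def by (subst sum_UNIV_eq_single[where a = i]) (auto simp: cartan_basis_def)

lemma Vwt_eq_supported:
  "Vwt chi = {f :: ('e::finite \<times> ('k::finite \<times> bool)) cpoly. keys f \<subseteq> {m. mon_weight m = chi}}"
proof -
  have eigen_iff: "actU A f = cconst (wt chi A) * f
      \<longleftrightarrow> (\<forall>m\<in>keys f. wt (mon_weight m) A = wt chi A)" if "A \<in> cartan" for A f
    by (auto simp: poly_mapping_eq_iff fun_eq_iff lookup_actU_cartan[OF that]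
        lookup_cconst_mult in_keys_iff)
  have "(\<forall>A\<in>cartan. wt w A = wt chi A) \<longleftrightarrow> w = chi" for w :: "'k \<Rightarrow> int"
  proof
    assume "\<forall>A\<in>cartan. wt w A = wt chi A"
    then show "w = chi"
      using cartan_basis_in_cartan by (metis wt_cartan_basis of_int_eq_iff ext)
  qed simp
  then show ?thesis
    unfolding Vwt_def by (auto simp: eigen_iff)
qed

section \<open>The tensor product of the \<open>L\<^sub>n\<close>\<close>

lemma cpoly_expansion: "g = (\<Sum>n\<in>keys g. cconst (lookup g n) * single n 1)"
  by (rule poly_mapping_eqI)
     (simp add: lookup_sum lookup_cconst_mult lookup_single when_def in_keys_iff if_distrib
       cong: if_cong)

lemma cspan_eq_supported:
  fixes S :: "'v cpoly set"
  assumes "\<And>n. n \<in> M \<Longrightarrow> single n 1 \<in> S" and "\<And>g. g \<in> S \<Longrightarrow> keys g \<subseteq> M"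
  shows "cspan S = {g. keys g \<subseteq> M}"
proof (intro equalityI subsetI)
  fix g
  assume "g \<in> cspan S"
  then obtain N :: nat and c h where g: "g = (\<Sum>j<N. cconst (c j) * h j)"
    and h: "\<forall>j<N. h j \<in> S"
    unfolding cspan_def by blast
  have "keys g \<subseteq> (\<Union>j<N. keys (cconst (c j) * h j))"
    unfolding g by (rule keys_sum)
  also have "\<dots> \<subseteq> (\<Union>j<N. keys (h j))"
    using keys_cconst_mult by (intro UN_mono) auto
  also have "\<dots> \<subseteq> M"
    using h assms(2) by auto
  finally show "g \<in> {g. keys g \<subseteq> M}" by simp
next
  fix g :: "'v cpoly"
  assume "g \<in> {g. keys g \<subseteq> M}"
  obtain h where h: "bij_betw h {..<card (keys g)} (keys g)"
    using ex_bij_betw_nat_finite[OF finite_keys] atLeast0LessThan by metis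
  have "g = (\<Sum>n\<in>keys g. cconst (lookup g n) * single n 1)"
    by (rule cpoly_expansion)
  also have "\<dots> = (\<Sum>j<card (keys g). cconst (lookup g (h j)) * single (h j) 1)"
    by (rule sum.reindex_bij_betw[OF h, symmetric])
  finally have "g = (\<Sum>j<card (keys g). cconst (lookup g (h j)) * single (h j) 1)" .
  moreover have "\<forall>j<card (keys g). single (h j) 1 \<in> S"
    using h \<open>g \<in> {g. keys g \<subseteq> M}\<close> assms(1) by (auto simp: bij_betw_def)
  ultimately show "g \<in> cspan S"
    unfolding cspan_def by (intro CollectI exI conjI)
qed

definition blk_weight :: "(bool \<times> 'e::finite \<Rightarrow>\<^sub>0 nat) \<Rightarrow> int" where
  "blk_weight m = int (blkdeg True m) - int (blkdeg False m)"

lemma Lsp_eq_supported: "Lsp n = {f. keys f \<subseteq> {m. blk_weight m = n}}"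
  by (auto simp: Lsp_def blk_weight_def)

lemma inj_Pair_left: "inj (Pair i)"
  by (simp add: inj_def)

lemma lookup_embmon: "lookup (embmon i m) (i', v) = (if i' = i then lookup m v else 0)"
  by (auto simp: embmon_def lookup_sum lookup_single when_def in_keys_iff)

lemma sum_embmon_map_key_Pair:
  "(\<Sum>i\<in>UNIV. embmon i (Poly_Mapping.map_key (Pair i) n)) = (n :: 'k::finite \<times> 'v \<Rightarrow>\<^sub>0 nat)"
proof (rule poly_mapping_eqI)
  fix x :: "'k \<times> 'v"
  show "lookup (\<Sum>i\<in>UNIV. embmon i (Poly_Mapping.map_key (Pair i) n)) x = lookup n x"
    by (cases x) (simp add: lookup_sum lookup_embmon lookup_map_key[OF inj_Pair_left])
qed

lemma map_key_Pair_sum_embmon: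
  "Poly_Mapping.map_key (Pair i) (\<Sum>i'\<in>(UNIV :: 'k::finite set). embmon i' (m i')) = m i"
  by (rule poly_mapping_eqI)
     (simp add: lookup_map_key[OF inj_Pair_left] lookup_sum lookup_embmon)

lemma emb_single: "emb i (single m 1) = single (embmon i m) 1"
  by (simp add: emb_def)

lemma keys_emb: "keys (emb i f) \<subseteq> embmon i ` keys f"
proof -
  have "keys (emb i f) \<subseteq> (\<Union>m\<in>keys f. keys (single (embmon i m) (lookup f m)))"
    unfolding emb_def by (rule keys_sum)
  also have "\<dots> \<subseteq> embmon i ` keys f"
    by auto
  finally show ?thesis .
qed

lemma prod_single_one:
  "finite S \<Longrightarrow> (\<Prod>i\<in>S. single (h i) 1 :: 'v cpoly) = single (\<Sum>i\<in>S. h i) 1"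
  by (induction S rule: finite_induct) (simp_all add: mult_single)

lemma keys_prod_emb:
  assumes "finite S" and "n \<in> keys (\<Prod>i\<in>S. emb i (f i))"
  shows "\<exists>m. n = (\<Sum>i\<in>S. embmon i (m i)) \<and> (\<forall>i\<in>S. m i \<in> keys (f i))"
  using assms(1,2)
proof (induction S arbitrary: n rule: finite_induct)
  case empty
  then show ?case by simp
next
  case (insert x S)
  have "n \<in> keys (emb x (f x) * (\<Prod>i\<in>S. emb i (f i)))"
    using insert.prems by (simp add: prod.insert[OF insert.hyps])
  then obtain a b where n: "n = a + b" and a: "a \<in> keys (emb x (f x))"
    and b: "b \<in> keys (\<Prod>i\<in>S. emb i (f i))"
    using subsetD[OF keys_mult] by blast
  obtain mx where mx: "a = embmon x mx" "mx \<in> keys (f x)"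
    using subsetD[OF keys_emb a] by blast
  obtain m where m: "b = (\<Sum>i\<in>S. embmon i (m i))" "\<forall>i\<in>S. m i \<in> keys (f i)"
    using insert.IH[OF b] by blast
  have "(\<Sum>i\<in>S. embmon i ((m(x := mx)) i)) = b"
    unfolding m(1) using insert.hyps(2) by (intro sum.cong) auto
  then have "n = (\<Sum>i\<in>insert x S. embmon i ((m(x := mx)) i))"
    by (simp add: sum.insert[OF insert.hyps] n mx(1))
  then show ?case
    using m(2) mx(2) by (intro exI[of _ "m(x := mx)"]) auto
qed

lemma Ltens_eq_supported:
  "Ltens chi = {g :: ('k::finite \<times> (bool \<times> 'e::finite)) cpoly.
     keys g \<subseteq> {n. \<forall>i. blk_weight (Poly_Mapping.map_key (Pair i) n) = chi i}}"
  unfolding Ltens_def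
proof (rule cspan_eq_supported)
  fix n :: "'k \<times> (bool \<times> 'e) \<Rightarrow>\<^sub>0 nat"
  assume n: "n \<in> {n. \<forall>i. blk_weight (Poly_Mapping.map_key (Pair i) n) = chi i}"
  let ?f = "\<lambda>i. single (Poly_Mapping.map_key (Pair i) n) 1 :: (bool \<times> 'e) cpoly"
  have "(\<Prod>i\<in>UNIV. emb i (?f i)) = single n 1"
    by (simp add: emb_single prod_single_one sum_embmon_map_key_Pair)
  moreover have "\<forall>i. ?f i \<in> Lsp (chi i)"
    using n by (simp add: Lsp_eq_supported)
  ultimately show "single n 1 \<in> {\<Prod>i\<in>UNIV. emb i (f i) |f. \<forall>i. f i \<in> Lsp (chi i)}"
    by (intro CollectI exI[of _ ?f]) simp
next
  fix g :: "('k \<times> (bool \<times> 'e)) cpoly"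
  assume "g \<in> {\<Prod>i\<in>UNIV. emb i (f i) |f. \<forall>i. f i \<in> Lsp (chi i)}"
  then obtain f where g: "g = (\<Prod>i\<in>UNIV. emb i (f i))" and f: "\<forall>i. f i \<in> Lsp (chi i)"
    by blast
  show "keys g \<subseteq> {n. \<forall>i. blk_weight (Poly_Mapping.map_key (Pair i) n) = chi i}"
  proof
    fix n
    assume "n \<in> keys g"
    then obtain m where "n = (\<Sum>i\<in>UNIV. embmon i (m i))" and "\<forall>i. m i \<in> keys (f i)"
      using keys_prod_emb[of UNIV n f] g by auto
    then show "n \<in> {n. \<forall>i. blk_weight (Poly_Mapping.map_key (Pair i) n) = chi i}"
      using f by (auto simp: map_key_Pair_sum_embmon Lsp_eq_supported)
  qed
qed

definition regroup :: "'e \<times> ('k \<times> bool) \<Rightarrow> 'k \<times> (bool \<times> 'e)" where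
  "regroup = (\<lambda>(a, i, b). (i, b, a))"

lemma bij_regroup: "bij regroup"
  by (rule o_bij[of "\<lambda>(i, b, a). (a, i, b)"]) (auto simp: regroup_def fun_eq_iff)

lemma mon_weight_map_key_regroup:
  "mon_weight (Poly_Mapping.map_key regroup n) i = blk_weight (Poly_Mapping.map_key (Pair i) n)"
proof -
  have "lookup (Poly_Mapping.map_key regroup n) (a, i, b) = lookup n (i, b, a)" for a i b
    by (simp only: lookup_map_key[OF bij_is_inj[OF bij_regroup]]) (simp add: regroup_def)
  then show ?thesis
    by (simp add: mon_weight_def blk_weight_def blkdeg_def lookup_map_key[OF inj_Pair_left])
qed

lemma rename_vars_regroup_Vwt: "rename_vars regroup ` Vwt chi = Ltens chi"
  by (simp add: Vwt_eq_supported Ltens_eq_supported rename_vars_supported[OF bij_regroup]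
      vimage_def fun_eq_iff mon_weight_map_key_regroup)

lemma rename_vars_regroup_actE:
  "rename_vars regroup (actE X f) = actT X (rename_vars regroup f)"
  unfolding actE_def actT_def
  by (rule rename_vars_der[OF bij_regroup]) (auto simp: regroup_def)

theorem mainTheorem3:
  fixes chi :: "'k::finite \<Rightarrow> int"
  shows "\<exists>\<phi> :: ('e::finite \<times> ('k \<times> bool)) cpoly \<Rightarrow> ('k \<times> (bool \<times> 'e)) cpoly.
           bij_betw \<phi> (Vwt chi) (Ltens chi)
         \<and> (\<forall>f\<in>Vwt chi. \<forall>g\<in>Vwt chi. \<phi> (f + g) = \<phi> f + \<phi> g)
         \<and> (\<forall>c. \<forall>f\<in>Vwt chi. \<phi> (cconst c * f) = cconst c * \<phi> f)
         \<and> (\<forall>X. \<forall>f\<in>Vwt chi. \<phi> (actE X f) = actT X (\<phi> f))"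
proof (intro exI[of _ "rename_vars regroup"] conjI ballI allI)
  show "bij_betw (rename_vars regroup) (Vwt chi) (Ltens chi)"
    using bij_rename_vars[OF bij_regroup] rename_vars_regroup_Vwt
    by (metis bij_betw_subset top_greatest)
qed (simp_all add: rename_vars_add[OF bij_regroup] rename_vars_cconst_mult[OF bij_regroup]
    rename_vars_regroup_actE)

end
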